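(* Let $r\in[0,1]$ and $n\in\mathbb{N}$. If $\omega=(\omega_1,\dots,\omega_n)$ and $\nu=(\nu_1,\dots,\nu_n)$ are distinct elements of $\{0,1\}^n$ with $[\omega]_r\cap[\nu]_r\neq\emptyset$, then there is a unique $i\in\{1,\dots,n\}$ with $\omega_i\neq\nu_i$, and $\omega_j=\nu_j$ for all $j\neq i$.
   Context: For $r\in[0,1]$, $f_{r,0}(x)=\frac{x}{2-r+rx}$ and $f_{r,1}(x)=\frac{1+(1-r)(1-x)}{2-r+rx}$ are the inverse branches of the map $T_r:[0,1]\to[0,1]$, $T_r(x)=\frac{(2-r)x}{1-rx}$ ($x\le1/2$), $T_r(x)=\frac{(2-r)(1-x)}{1-r+rx}$ ($x>1/2$). For $\varphi=(\varphi_1,\dots,\varphi_n)\in\{0,1\}^n$, $f_{r,\varphi}=f_{r,\varphi_1}\circ\cdots\circ f_{r,\varphi_n}$ and the cylinder set is $[\varphi]_r=f_{r,\varphi}([0,1])$. *)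

theory Defs
  imports Complex_Main
begin

text \<open>Inverse branches of T_r. Digits are natural numbers 0 or 1.\<close>
definition f0 :: "real \<Rightarrow> real \<Rightarrow> real" where
  "f0 r x = x / (2 - r + r * x)"

definition f1 :: "real \<Rightarrow> real \<Rightarrow> real" where
  "f1 r x = (1 + (1 - r) * (1 - x)) / (2 - r + r * x)"

definition fdigit :: "real \<Rightarrow> nat \<Rightarrow> real \<Rightarrow> real" where
  "fdigit r a = (if a = 0 then f0 r else f1 r)"

text \<open>f_{r,phi} = f_{r,phi_1} o ... o f_{r,phi_n}, words as lists (phi_1 is the head).\<close>
fun fword :: "real \<Rightarrow> nat list \<Rightarrow> real \<Rightarrow> real" where
  "fword r [] = id"
| "fword r (a # w) = fdigit r a \<circ> fword r w"

definition cylinder :: "real \<Rightarrow> nat list \<Rightarrow> real set" where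
  "cylinder r w = fword r w ` {0..1}"

end

theory Submission
  imports Defs
begin

(* For 0 \<le> r \<le> 1 both branches f0, f1 are injective self-maps of [0,1];
   f0 maps into [0,1/2] and f1 into [1/2,1], and they meet only in the value 1/2,
   which is f0 r 1 = f1 r 1.  Hence if f_{r,\<omega>}(y) = f_{r,\<nu>}(z) with y, z \<in> [0,1]:
   when the first digits agree, injectivity strips them off; when they differ, the
   tails must both send their arguments to 1.  The value 1 is attained by a word
   only as f_{r,1 0 ... 0}(0), so two equally long tails hitting 1 coincide.
   Induction on the word therefore shows that \<omega> and \<nu> differ in exactly one
   position (predicate differs_only_at), and that position is then unique. *)

lemma denominator_ge_1:
  fixes r t :: real
  assumes "0 \<le> r" "r \<le> 1" "0 \<le> t" "t \<le> 1"
  shows "1 \<le> 2 - r + r * t"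
proof -
  have "0 \<le> r * t" using assms by simp
  then show ?thesis using \<open>r \<le> 1\<close> by linarith
qed

lemma f0_bounds:
  assumes "0 \<le> r" "r \<le> 1" "0 \<le> t" "t \<le> 1"
  shows "0 \<le> f0 r t \<and> f0 r t \<le> 1/2"
proof -
  have den: "1 \<le> 2 - r + r * t" using denominator_ge_1 assms by blast
  have "0 \<le> (2 - r) * (1 - t)" using assms by simp
  then have "2 * t \<le> 2 - r + r * t" by (simp add: algebra_simps)
  then show ?thesis using den assms unfolding f0_def by (simp add: field_simps)
qed

lemma f1_bounds:
  assumes "0 \<le> r" "r \<le> 1" "0 \<le> t" "t \<le> 1"
  shows "1/2 \<le> f1 r t \<and> f1 r t \<le> 1"
proof -
  have den: "1 \<le> 2 - r + r * t" using denominator_ge_1 assms by blast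
  have "0 \<le> (1 - r) * (1 - t)" "0 \<le> r * (1 - t)" using assms by simp_all
  then have lower: "2 - r + r * t \<le> 2 * (1 + (1 - r) * (1 - t))"
    by (simp add: algebra_simps)
  have upper: "1 + (1 - r) * (1 - t) \<le> 2 - r + r * t"
    using assms by (simp add: algebra_simps)
  show ?thesis using den lower upper unfolding f1_def by (simp add: field_simps)
qed

text \<open>Both branches are injective on [0,1]: cross-multiplying an equality of values
  leaves the factor (2 - r) * (s - t).\<close>
lemma f0_inj:
  assumes "0 \<le> r" "r \<le> 1" "0 \<le> s" "s \<le> 1" "0 \<le> t" "t \<le> 1" "f0 r s = f0 r t"
  shows "s = t"
proof -
  have "1 \<le> 2 - r + r * s" "1 \<le> 2 - r + r * t" using denominator_ge_1 assms by blast+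
  then have "s * (2 - r + r * t) = t * (2 - r + r * s)"
    using assms(7) unfolding f0_def by (simp add: field_simps)
  then have "(2 - r) * (s - t) = 0" by (simp add: algebra_simps)
  then show ?thesis using assms by auto
qed

lemma f1_inj:
  assumes "0 \<le> r" "r \<le> 1" "0 \<le> s" "s \<le> 1" "0 \<le> t" "t \<le> 1" "f1 r s = f1 r t"
  shows "s = t"
proof -
  have "1 \<le> 2 - r + r * s" "1 \<le> 2 - r + r * t" using denominator_ge_1 assms by blast+
  then have "(1 + (1 - r) * (1 - s)) * (2 - r + r * t) = (1 + (1 - r) * (1 - t)) * (2 - r + r * s)"
    using assms(7) unfolding f1_def by (simp add: field_simps)
  then have "(2 - r) * (s - t) = 0" by (simp add: algebra_simps)
  then show ?thesis using assms by auto
qed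

lemma f0_eq_half:
  assumes "0 \<le> r" "r \<le> 1" "0 \<le> t" "t \<le> 1" "f0 r t = 1/2"
  shows "t = 1"
proof -
  have "1 \<le> 2 - r + r * t" using denominator_ge_1 assms by blast
  then have "2 * t = 2 - r + r * t" using assms(5) unfolding f0_def by (simp add: field_simps)
  then have "(2 - r) * (t - 1) = 0" by (simp add: algebra_simps)
  then show ?thesis using assms by auto
qed

lemma f1_eq_half:
  assumes "0 \<le> r" "r \<le> 1" "0 \<le> t" "t \<le> 1" "f1 r t = 1/2"
  shows "t = 1"
proof -
  have "1 \<le> 2 - r + r * t" using denominator_ge_1 assms by blast
  then have "2 * (1 + (1 - r) * (1 - t)) = 2 - r + r * t"
    using assms(5) unfolding f1_def by (simp add: field_simps)
  then have "(2 - r) * (t - 1) = 0" by (simp add: algebra_simps)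
  then show ?thesis using assms by auto
qed

lemma f0_eq_0:
  assumes "0 \<le> r" "r \<le> 1" "0 \<le> t" "t \<le> 1" "f0 r t = 0"
  shows "t = 0"
  using denominator_ge_1[OF assms(1-4)] assms(5) unfolding f0_def by simp

lemma f1_eq_1:
  assumes "0 \<le> r" "r \<le> 1" "0 \<le> t" "t \<le> 1" "f1 r t = 1"
  shows "t = 0"
proof -
  have "1 \<le> 2 - r + r * t" using denominator_ge_1 assms by blast
  then have "1 + (1 - r) * (1 - t) = 2 - r + r * t"
    using assms(5) unfolding f1_def by (simp add: field_simps)
  then show ?thesis by (simp add: algebra_simps)
qed

lemma fdigit_range:
  assumes "0 \<le> r" "r \<le> 1" "t \<in> {0..1}"
  shows "fdigit r a t \<in> {0..1}"
  using assms f0_bounds[of r t] f1_bounds[of r t] by (auto simp: fdigit_def)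

lemma fdigit_inj:
  assumes "0 \<le> r" "r \<le> 1" "s \<in> {0..1}" "t \<in> {0..1}" "fdigit r a s = fdigit r a t"
  shows "s = t"
  using assms f0_inj[of r s t] f1_inj[of r s t] by (auto simp: fdigit_def split: if_splits)

lemma fdigit_collision:
  assumes "0 \<le> r" "r \<le> 1" "s \<in> {0..1}" "t \<in> {0..1}"
    and "a \<in> {0, 1}" "b \<in> {0, 1}" "a \<noteq> b"
    and "fdigit r a s = fdigit r b t"
  shows "s = 1 \<and> t = 1"
proof -
  have meet_half: "s = 1 \<and> t = 1"
    if "f0 r s = f1 r t" and "s \<in> {0..1}" "t \<in> {0..1}" for s t :: real
  proof -
    have "f0 r s = 1/2" "f1 r t = 1/2"
      using that f0_bounds[of r s] f1_bounds[of r t] assms(1,2) by auto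
    then show ?thesis using that f0_eq_half f1_eq_half assms(1,2) by auto
  qed
  consider "a = 0" "b = 1" | "a = 1" "b = 0" using assms(5-7) by auto
  then show ?thesis
  proof cases
    case 1
    then show ?thesis using meet_half[of s t] assms(3,4,8) by (simp add: fdigit_def)
  next
    case 2
    then show ?thesis using meet_half[of t s] assms(3,4,8) by (simp add: fdigit_def)
  qed
qed

lemma fword_range:
  assumes "0 \<le> r" "r \<le> 1" "y \<in> {0..1}"
  shows "fword r w y \<in> {0..1}"
  by (induction w) (use assms fdigit_range in auto)

lemma fword_eq_0:
  assumes "0 \<le> r" "r \<le> 1" "y \<in> {0..1}" "fword r w y = 0"
  shows "w = replicate (length w) 0"
  using assms(4)
proof (induction w)
  case (Cons a w)
  have range: "0 \<le> fword r w y" "fword r w y \<le> 1" using fword_range assms by auto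
  show ?case
  proof (cases "a = 0")
    case True
    then have "fword r w y = 0"
      using Cons.prems f0_eq_0[OF assms(1,2) range] by (simp add: fdigit_def)
    then show ?thesis using Cons.IH True by simp
  next
    case False
    then show ?thesis
      using Cons.prems f1_bounds[OF assms(1,2) range] by (simp add: fdigit_def)
  qed
qed simp

lemma fword_eq_1:
  assumes "0 \<le> r" "r \<le> 1" "y \<in> {0..1}" "set (a # w) \<subseteq> {0, 1}"
    and "fword r (a # w) y = 1"
  shows "a # w = 1 # replicate (length w) 0"
proof -
  have range: "0 \<le> fword r w y" "fword r w y \<le> 1" using fword_range assms by auto
  have "a \<noteq> 0"
  proof
    assume "a = 0"
    then have "f0 r (fword r w y) = 1" using assms(5) by (simp add: fdigit_def)
    then show False using f0_bounds[OF assms(1,2) range] by simp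
  qed
  then have "a = 1" using assms(4) by auto
  then have "f1 r (fword r w y) = 1" using assms(5) by (simp add: fdigit_def)
  then have "fword r w y = 0" using f1_eq_1[OF assms(1,2) range] by blast
  then show ?thesis using fword_eq_0[OF assms(1-3)] \<open>a = 1\<close> by metis
qed

lemma fword_eq_1_unique:
  assumes "0 \<le> r" "r \<le> 1" "y \<in> {0..1}" "z \<in> {0..1}"
    and "length w = length v" "set w \<subseteq> {0, 1}" "set v \<subseteq> {0, 1}"
    and "fword r w y = 1" "fword r v z = 1"
  shows "w = v"
proof (cases w)
  case (Cons a w')
  then obtain b v' where "v = b # v'" using assms(5) by (cases v) auto
  then show ?thesis using Cons assms fword_eq_1[of r y a w'] fword_eq_1[of r z b v'] by auto
qed (use assms in auto)

definition differs_only_at :: "'a list \<Rightarrow> 'a list \<Rightarrow> nat \<Rightarrow> bool" where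
  "differs_only_at \<omega> \<nu> i \<longleftrightarrow>
     i < length \<omega> \<and> \<omega> ! i \<noteq> \<nu> ! i \<and> (\<forall>j<length \<omega>. j \<noteq> i \<longrightarrow> \<omega> ! j = \<nu> ! j)"

lemma differs_only_at_Cons_same:
  "differs_only_at w v i \<Longrightarrow> differs_only_at (a # w) (a # v) (Suc i)"
  unfolding differs_only_at_def by (auto simp: nth_Cons split: nat.splits)

lemma differs_only_at_head:
  "a \<noteq> b \<Longrightarrow> differs_only_at (a # w) (b # w) 0"
  unfolding differs_only_at_def by (auto simp: nth_Cons split: nat.splits)

lemma fword_eq_differs_only_at:
  assumes "0 \<le> r" "r \<le> 1"
    and "length \<omega> = length \<nu>" "set \<omega> \<subseteq> {0, 1}" "set \<nu> \<subseteq> {0, 1}" "\<omega> \<noteq> \<nu>"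
    and "y \<in> {0..1}" "z \<in> {0..1}" "fword r \<omega> y = fword r \<nu> z"
  shows "\<exists>i. differs_only_at \<omega> \<nu> i"
  using assms(3-9)
proof (induction \<omega> arbitrary: \<nu>)
  case (Cons a w)
  then obtain b v where \<nu>: "\<nu> = b # v" by (cases \<nu>) auto
  have tails: "length w = length v" "set w \<subseteq> {0, 1}" "set v \<subseteq> {0, 1}"
    "fword r w y \<in> {0..1}" "fword r v z \<in> {0..1}"
    using Cons.prems \<nu> fword_range[OF assms(1,2)] by auto
  have heads: "a \<in> {0, 1}" "b \<in> {0, 1}" using Cons.prems \<nu> by auto
  have eq: "fdigit r a (fword r w y) = fdigit r b (fword r v z)" using Cons.prems \<nu> by simp
  show ?case
  proof (cases "a = b")
    case True
    then have "fword r w y = fword r v z" using fdigit_inj[OF assms(1,2)] tails eq by blast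
    moreover have "w \<noteq> v" using Cons.prems(4) True \<nu> by simp
    ultimately obtain i where "differs_only_at w v i"
      using Cons.IH[OF tails(1-3) _ Cons.prems(5,6)] by blast
    then show ?thesis using differs_only_at_Cons_same[of w v i a] True \<nu> by blast
  next
    case False
    then have "fword r w y = 1" "fword r v z = 1"
      using fdigit_collision[OF assms(1,2)] tails heads eq by blast+
    then have "w = v" using fword_eq_1_unique[OF assms(1,2) Cons.prems(5,6)] tails by blast
    then show ?thesis using differs_only_at_head[of a b v] False \<nu> by blast
  qed
qed simp

theorem lemma4p1:
  fixes r :: real and n :: nat and \<omega> \<nu> :: "nat list"
  assumes "0 \<le> r" "r \<le> 1"
    and "length \<omega> = n" "length \<nu> = n"
    and "set \<omega> \<subseteq> {0, 1}" "set \<nu> \<subseteq> {0, 1}"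
    and "\<omega> \<noteq> \<nu>"
    and "cylinder r \<omega> \<inter> cylinder r \<nu> \<noteq> {}"
  shows "\<exists>!i. i < n \<and> \<omega> ! i \<noteq> \<nu> ! i \<and> (\<forall>j<n. j \<noteq> i \<longrightarrow> \<omega> ! j = \<nu> ! j)"
proof -
  obtain y z where "y \<in> {0..1}" "z \<in> {0..1}" "fword r \<omega> y = fword r \<nu> z"
    using assms(8) unfolding cylinder_def by blast
  moreover have "length \<omega> = length \<nu>" using assms(3,4) by simp
  ultimately obtain i where "differs_only_at \<omega> \<nu> i"
    using fword_eq_differs_only_at[OF assms(1,2) _ assms(5-7)] by blast
  then have "i < n \<and> \<omega> ! i \<noteq> \<nu> ! i \<and> (\<forall>j<n. j \<noteq> i \<longrightarrow> \<omega> ! j = \<nu> ! j)"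
    using assms(3) unfolding differs_only_at_def by blast
  then show ?thesis by blast
qed

end
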